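(* Let $\phi$ be a Young function and let $f,g:\mathbb{R}^{N}\rightarrow [0,\infty ]$ be Borel measurable with $\sup f=\sup g$ (possibly $\infty$). Then $f\barwedge g$ is measurable and $$\max\{\|f\|_{\phi },\|g\|_{\phi }\}\leq \|f\barwedge g\|_{\phi }.$$
   Context: $(f\barwedge g)(x):=\sup_{y}\min\{f(x-y),g(y)\}$. A Young function is a nonconstant $\phi:[0,\infty]\to[0,\infty]$ with $\phi(0)=0$, nondecreasing, convex and left continuous; $\|h\|_{\phi}:=\inf\{r>0:\int_{\mathbb{R}^N}\phi(r^{-1}|h|)\le 1\}$ ($=\infty$ if no such $r$). Measurability means Lebesgue measurability. *)

theory Defs
  imports "HOL-Analysis.Analysis"
begin

definition supmin_conv :: "('a::euclidean_space \<Rightarrow> ennreal) \<Rightarrow> ('a \<Rightarrow> ennreal) \<Rightarrow> 'a \<Rightarrow> ennreal" where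
  "supmin_conv f g x = (SUP y. min (f (x - y)) (g y))"

definition young_function :: "(ennreal \<Rightarrow> ennreal) \<Rightarrow> bool" where
  "young_function \<phi> \<longleftrightarrow>
     (\<exists>s t. \<phi> s \<noteq> \<phi> t) \<and> \<phi> 0 = 0 \<and> mono \<phi> \<and>
     (\<forall>a b (l::real). 0 \<le> l \<and> l \<le> 1 \<longrightarrow>
        \<phi> (ennreal l * a + ennreal (1 - l) * b) \<le> ennreal l * \<phi> a + ennreal (1 - l) * \<phi> b) \<and>
     (\<forall>t>0. (\<phi> \<longlongrightarrow> \<phi> t) (at_left t))"

text \<open>Luxemburg norm; Inf of the empty set in ennreal is \<infinity>.\<close>
definition luxemburg :: "(ennreal \<Rightarrow> ennreal) \<Rightarrow> ('a::euclidean_space \<Rightarrow> ennreal) \<Rightarrow> ennreal" where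
  "luxemburg \<phi> h = Inf {ennreal r | r. r > 0 \<and> (\<integral>\<^sup>+ x. \<phi> (h x / ennreal r) \<partial>lebesgue) \<le> 1}"

end

theory Submission
  imports Defs
begin

text \<open>
  Write \<open>F\<close> for the sup-min convolution of \<open>f\<close> and \<open>g\<close>. Its superlevel set \<open>{F > t}\<close> is the
  projection of the Borel set \<open>{(x, z). t < f z \<and> t < g (x - z)}\<close>. Borel sets are obtained from
  compact sets by the Suslin operation, which commutes with projections (compactness along the
  branches) and preserves Lebesgue measurability (via measurable hulls of the partial Suslin sets);
  hence \<open>F\<close> is Lebesgue measurable.

  For the norm inequality note \<open>min (f x) (g y) \<le> F (x + y)\<close>. The values \<open>g y\<close> exhaust
  \<open>sup g \<ge> f\<close>, so left continuity of \<open>\<phi>\<close>, monotone convergence and translation invariance of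
  Lebesgue measure give \<open>\<integral> \<phi> (f / r) \<le> \<integral> \<phi> (F / r)\<close> for every \<open>r > 0\<close>; symmetrically for \<open>g\<close>.
\<close>

section \<open>Measurable hulls and the Suslin operation\<close>

lemma exists_measurable_hull:
  assumes TU: "T \<subseteq> U" and U: "U \<in> sets M" and fin: "emeasure M U < \<infinity>"
  shows "\<exists>H\<in>sets M. T \<subseteq> H \<and> H \<subseteq> U \<and> (\<forall>V\<in>sets M. T \<subseteq> V \<longrightarrow> H - V \<in> null_sets M)"
proof -
  define C where "C = {V \<in> sets M. T \<subseteq> V \<and> V \<subseteq> U}"
  define m where "m = Inf (measure M ` C)"
  have UC: "U \<in> C" using TU U by (auto simp: C_def)
  have bdd: "bdd_below (measure M ` C)" by (auto intro!: bdd_belowI[of _ 0])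
  have finC: "emeasure M V \<noteq> \<infinity>" if "V \<subseteq> U" for V
    using emeasure_mono[OF that U] fin by (auto simp: top_unique)
  have "\<exists>V\<in>C. measure M V < m + 1 / (real k + 1)" for k :: nat
  proof -
    have "Inf (measure M ` C) < m + 1 / (real k + 1)" unfolding m_def by simp
    from cInf_lessD[OF _ this] UC show ?thesis by blast
  qed
  then obtain V where V: "\<And>k. V k \<in> C" "\<And>k. measure M (V k) < m + 1 / (real k + 1)"
    by metis
  define H where "H = U \<inter> (\<Inter>k. V k)"
  have HC: "H \<in> C" using V(1) U TU by (auto simp: H_def C_def)
  then have Hs: "H \<in> sets M" and finH: "emeasure M H \<noteq> \<infinity>" using finC by (auto simp: C_def)
  have H_min: "measure M H \<le> m"
  proof (rule field_le_epsilon)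
    fix e :: real assume "0 < e"
    then obtain k :: nat where k: "1 / (real k + 1) < e"
      by (metis add.commute nat_approx_posE of_nat_Suc)
    have "measure M H \<le> measure M (V k)"
      using V(1)[of k] Hs finC[of "V k"]
      by (intro measure_mono_fmeasurable) (auto simp: H_def C_def fmeasurable_def less_top)
    with V(2)[of k] k show "measure M H \<le> m + e" by linarith
  qed
  have "H - W \<in> null_sets M" if W: "W \<in> sets M" "T \<subseteq> W" for W
  proof -
    have HW: "H \<inter> W \<in> C" using HC W by (auto simp: C_def)
    then have "m \<le> measure M (H \<inter> W)" unfolding m_def using bdd by (rule cInf_lower[OF imageI])
    moreover have "measure M (H - W) = measure M H - measure M (H \<inter> W)"
    proof -
      have "H - W = H - (H \<inter> W)" by auto
      then show ?thesis using measure_Diff[OF finH Hs, of "H \<inter> W"] HW by (auto simp: C_def)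
    qed
    moreover have "measure M (H \<inter> W) \<le> measure M H"
      using HW finH Hs by (intro measure_mono_fmeasurable) (auto simp: C_def fmeasurable_def less_top)
    ultimately have "measure M (H - W) = 0" using H_min by linarith
    moreover have "emeasure M (H - W) \<noteq> \<infinity>" using finC[of "H - W"] HC by (auto simp: C_def)
    ultimately have "emeasure M (H - W) = 0" using emeasure_eq_ennreal_measure by fastforce
    then show "H - W \<in> null_sets M" using Hs W by auto
  qed
  with HC Hs show ?thesis by (auto simp: C_def)
qed

definition suslin :: "(nat list \<Rightarrow> 'b set) \<Rightarrow> 'b set" where
  "suslin K = (\<Union>\<sigma>. \<Inter>n. K (map \<sigma> [0..<Suc n]))"

lemma suslin_memI:
  assumes root: "x \<in> H []" and branch: "\<And>s. x \<in> H s \<Longrightarrow> \<exists>k. x \<in> H (s @ [k])"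
    and HK: "\<And>s. s \<noteq> [] \<Longrightarrow> H s \<subseteq> K s"
  shows "x \<in> suslin K"
proof -
  define next_index where "next_index s = (SOME k. x \<in> H (s @ [k]))" for s
  have next_index: "x \<in> H (s @ [next_index s])" if "x \<in> H s" for s
    unfolding next_index_def by (rule someI_ex) (rule branch[OF that])
  define L where "L n = rec_nat [] (\<lambda>_ l. l @ [next_index l]) n" for n
  have L0: "L 0 = []" and LS: "L (Suc n) = L n @ [next_index (L n)]" for n
    by (simp_all add: L_def)
  have L_mem: "x \<in> H (L n)" for n
    by (induction n) (use root next_index in \<open>auto simp: L0 LS\<close>)
  define \<sigma> where "\<sigma> n = next_index (L n)" for n
  have map_\<sigma>: "map \<sigma> [0..<n] = L n" for n
    by (induction n) (auto simp: L0 LS \<sigma>_def)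
  have "x \<in> K (map \<sigma> [0..<Suc n])" for n
    using L_mem[of "Suc n"] HK[of "L (Suc n)"] by (auto simp: map_\<sigma> LS \<sigma>_def)
  then show ?thesis by (auto simp: suslin_def)
qed

lemma suslin_in_completion_bounded:
  fixes K :: "nat list \<Rightarrow> 'a set"
  assumes K: "\<And>s. K s \<in> sets (completion M)" and KW: "\<And>s. K s \<subseteq> W"
    and W: "W \<in> sets (completion M)" and fin: "emeasure (completion M) W < \<infinity>"
  shows "suslin K \<in> sets (completion M)"
proof -
  define S where "S s = (\<Union>\<sigma>\<in>{\<sigma>. map \<sigma> [0..<length s] = s}. \<Inter>n. K (map \<sigma> [0..<Suc n]))" for s
  define U where "U s = (if s = [] then W else K s)" for s
  have U: "U s \<in> sets (completion M)" "emeasure (completion M) (U s) < \<infinity>" for s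
    using K W fin emeasure_mono[OF KW W] by (auto simp: U_def intro: order.strict_trans1)
  have SU: "S s \<subseteq> U s" for s
  proof
    fix x assume "x \<in> S s"
    then obtain \<sigma> where "map \<sigma> [0..<length s] = s" "\<And>n. x \<in> K (map \<sigma> [0..<Suc n])"
      by (auto simp: S_def)
    then show "x \<in> U s" using KW by (cases s) (auto simp: U_def, metis length_Cons)
  qed
  have S_step: "S s \<subseteq> (\<Union>k. S (s @ [k]))" for s
  proof
    fix x assume "x \<in> S s"
    then obtain \<sigma> where \<sigma>: "map \<sigma> [0..<length s] = s" "\<And>n. x \<in> K (map \<sigma> [0..<Suc n])"
      by (auto simp: S_def)
    have "map \<sigma> [0..<length (s @ [\<sigma> (length s)])] = s @ [\<sigma> (length s)]" using \<sigma>(1) by simp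
    then show "x \<in> (\<Union>k. S (s @ [k]))" using \<sigma>(2) unfolding S_def by blast
  qed
  obtain H where H: "\<And>s. H s \<in> sets (completion M)" "\<And>s. S s \<subseteq> H s" "\<And>s. H s \<subseteq> U s"
    "\<And>s V. V \<in> sets (completion M) \<Longrightarrow> S s \<subseteq> V \<Longrightarrow> H s - V \<in> null_sets (completion M)"
    using exists_measurable_hull[OF SU U] by metis
  define D where "D s = H s - (\<Union>k. H (s @ [k]))" for s
  have "D s \<in> null_sets (completion M)" for s
    unfolding D_def
  proof (rule H(4))
    show "(\<Union>k. H (s @ [k])) \<in> sets (completion M)" using H(1) by auto
    show "S s \<subseteq> (\<Union>k. H (s @ [k]))" using S_step H(2) by blast
  qed
  then have D_null: "(\<Union>s. D s) \<in> null_sets (completion M)" by (intro null_sets_UN') auto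
  \<comment> \<open>Off the null set \<open>\<Union>s. D s\<close>, every point of the hull of \<open>S []\<close> admits an infinite branch.\<close>
  have "H [] - (\<Union>s. D s) \<subseteq> suslin K"
  proof
    fix x assume x: "x \<in> H [] - (\<Union>s. D s)"
    show "x \<in> suslin K"
    proof (rule suslin_memI[of x H])
      show "\<exists>k. x \<in> H (s @ [k])" if "x \<in> H s" for s using x that by (auto simp: D_def)
      show "H s \<subseteq> K s" if "s \<noteq> []" for s using H(3)[of s] that by (simp add: U_def)
    qed (use x in blast)
  qed
  then have "H [] - suslin K \<in> null_sets (completion M)"
    by (intro null_sets_completion_subset[OF _ D_null]) blast
  moreover have "suslin K = H [] - (H [] - suslin K)"
    using H(2)[of "[]"] by (auto simp: S_def suslin_def)
  ultimately show ?thesis using H(1)[of "[]"] by (metis null_setsD2 sets.Diff)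
qed

lemma suslin_lebesgue:
  fixes K :: "nat list \<Rightarrow> 'a::euclidean_space set"
  assumes "\<And>s. K s \<in> sets lebesgue"
  shows "suslin K \<in> sets lebesgue"
proof -
  have "suslin K = (\<Union>k::nat. suslin (\<lambda>s. K s \<inter> ball 0 (real k)))"
  proof
    show "suslin K \<subseteq> (\<Union>k::nat. suslin (\<lambda>s. K s \<inter> ball 0 (real k)))"
    proof
      fix x assume "x \<in> suslin K"
      moreover obtain k :: nat where "norm x < real k" using reals_Archimedean2 by blast
      ultimately show "x \<in> (\<Union>k::nat. suslin (\<lambda>s. K s \<inter> ball 0 (real k)))"
        by (auto simp: suslin_def)
    qed
  qed (auto simp: suslin_def)
  moreover have "suslin (\<lambda>s. K s \<inter> ball 0 (real k)) \<in> sets lebesgue" for k :: nat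
    using lmeasurable_ball[of 0 "real k"]
    by (intro suslin_in_completion_bounded[where W="ball 0 (real k)"])
       (auto simp: assms fmeasurable_def)
  ultimately show ?thesis by auto
qed

section \<open>Suslin sets of compact sets\<close>

definition compact_suslin :: "'b::topological_space set \<Rightarrow> bool" where
  "compact_suslin A \<longleftrightarrow> (\<exists>K. (\<forall>s. compact (K s)) \<and> A = suslin K)"

lemma compact_imp_compact_suslin: "compact C \<Longrightarrow> compact_suslin C"
  unfolding compact_suslin_def by (rule exI[of _ "\<lambda>_. C"]) (auto simp: suslin_def)

lemma compact_suslin_choice:
  assumes "\<And>i. compact_suslin (A i)"
  obtains K where "\<And>i s. compact (K i s)" and "\<And>i. A i = suslin (K i)"
proof -
  have "\<forall>i. \<exists>K. (\<forall>s. compact (K s)) \<and> A i = suslin K"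
    using assms unfolding compact_suslin_def by blast
  then show thesis using that by metis
qed

lemma compact_suslin_UN:
  assumes "\<And>i::nat. compact_suslin (A i)"
  shows "compact_suslin (\<Union>i. A i)"
proof -
  obtain K where K: "\<And>i s. compact (K i s)" "\<And>i. A i = suslin (K i)"
    by (rule compact_suslin_choice[of A]) (auto intro: assms)
  \<comment> \<open>The first index of a branch encodes both the chosen \<open>i\<close> and the first index of a branch of \<open>K i\<close>.\<close>
  define K' where "K' s = (case s of [] \<Rightarrow> {} | c # s' \<Rightarrow> K (fst (prod_decode c)) (snd (prod_decode c) # s'))" for s
  have "compact (K' s)" for s by (cases s) (auto simp: K'_def K)
  moreover have "(\<Union>i. A i) = suslin K'"
    unfolding K(2)
  proof
    show "(\<Union>i. suslin (K i)) \<subseteq> suslin K'"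
    proof
      fix x assume "x \<in> (\<Union>i. suslin (K i))"
      then obtain i \<tau> where \<tau>: "\<And>n. x \<in> K i (map \<tau> [0..<Suc n])" by (auto simp: suslin_def)
      define \<sigma> where "\<sigma> = case_nat (prod_encode (i, \<tau> 0)) (\<lambda>m. \<tau> (Suc m))"
      have "x \<in> K' (map \<sigma> [0..<Suc n])" for n
      proof -
        have "map \<tau> [0..<Suc n] = \<tau> 0 # map (\<lambda>m. \<tau> (Suc m)) [0..<n]"
          by (rule map_upt_Suc)
        moreover have "map \<sigma> [0..<Suc n] = prod_encode (i, \<tau> 0) # map (\<lambda>m. \<tau> (Suc m)) [0..<n]"
          unfolding map_upt_Suc by (simp add: \<sigma>_def)
        ultimately show ?thesis using \<tau>[of n] by (simp add: K'_def del: upt_Suc)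
      qed
      then show "x \<in> suslin K'" by (auto simp: suslin_def)
    qed
    show "suslin K' \<subseteq> (\<Union>i. suslin (K i))"
    proof
      fix x assume "x \<in> suslin K'"
      then obtain \<sigma> where \<sigma>: "\<And>n. x \<in> K' (map \<sigma> [0..<Suc n])" by (auto simp: suslin_def)
      define \<tau> where "\<tau> = case_nat (snd (prod_decode (\<sigma> 0))) (\<lambda>m. \<sigma> (Suc m))"
      have "x \<in> K (fst (prod_decode (\<sigma> 0))) (map \<tau> [0..<Suc n])" for n
      proof -
        have "map \<sigma> [0..<Suc n] = \<sigma> 0 # map (\<lambda>m. \<sigma> (Suc m)) [0..<n]"
          by (rule map_upt_Suc)
        moreover have "map \<tau> [0..<Suc n] = snd (prod_decode (\<sigma> 0)) # map (\<lambda>m. \<sigma> (Suc m)) [0..<n]"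
          unfolding map_upt_Suc by (simp add: \<tau>_def)
        ultimately show ?thesis using \<sigma>[of n] by (simp add: K'_def del: upt_Suc)
      qed
      then show "x \<in> (\<Union>i. suslin (K i))" by (auto simp: suslin_def)
    qed
  qed
  ultimately show ?thesis unfolding compact_suslin_def by blast
qed

lemma prod_encode_mono_snd:
  assumes "k \<le> j"
  shows "prod_encode (i, k) \<le> prod_encode (i, j)"
proof -
  have "(i + k) * Suc (i + k) div 2 \<le> (i + j) * Suc (i + j) div 2"
    using assms by (intro div_le_mono mult_le_mono) auto
  then show ?thesis unfolding prod_encode_def triangle_def by simp
qed

lemma compact_suslin_INT:
  assumes "\<And>i::nat. compact_suslin (A i)"
  shows "compact_suslin (\<Inter>i. A i)"
proof -
  obtain K where K: "\<And>i s. compact (K i s)" "\<And>i. A i = suslin (K i)"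
    by (rule compact_suslin_choice[of A]) (auto intro: assms)
  \<comment> \<open>A single branch \<open>\<sigma>\<close> interleaves branches \<open>\<tau> i\<close> of all \<open>K i\<close> via \<open>\<sigma> (prod_encode (i, j)) = \<tau> i j\<close>;
    the node of length \<open>prod_encode (i, j) + 1\<close> tests the first \<open>j + 1\<close> indices of \<open>\<tau> i\<close>.\<close>
  define K' where "K' s = (case prod_decode (length s - 1) of (i, j) \<Rightarrow>
       K i (map (\<lambda>k. s ! prod_encode (i, k)) [0..<Suc j]))" for s
  have K'_eq: "K' (map \<sigma> [0..<Suc (prod_encode (i, j))]) = K i (map (\<lambda>k. \<sigma> (prod_encode (i, k))) [0..<Suc j])"
    for \<sigma> i j
  proof -
    have "K' (map \<sigma> [0..<Suc (prod_encode (i, j))])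
        = K i (map (\<lambda>k. map \<sigma> [0..<Suc (prod_encode (i, j))] ! prod_encode (i, k)) [0..<Suc j])"
      by (simp add: K'_def del: upt_Suc)
    also have "map (\<lambda>k. map \<sigma> [0..<Suc (prod_encode (i, j))] ! prod_encode (i, k)) [0..<Suc j]
        = map (\<lambda>k. \<sigma> (prod_encode (i, k))) [0..<Suc j]"
      using prod_encode_mono_snd[of _ j i]
      by (intro map_cong) (auto simp del: upt_Suc simp: nth_map_upt less_Suc_eq_le)
    finally show ?thesis .
  qed
  have "compact (K' s)" for s by (auto simp: K'_def K split: prod.split)
  moreover have "(\<Inter>i. A i) = suslin K'"
    unfolding K(2)
  proof
    show "suslin K' \<subseteq> (\<Inter>i. suslin (K i))"
    proof
      fix x assume "x \<in> suslin K'"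
      then obtain \<sigma> where \<sigma>: "\<And>n. x \<in> K' (map \<sigma> [0..<Suc n])" by (auto simp: suslin_def)
      have "x \<in> K i (map (\<lambda>k. \<sigma> (prod_encode (i, k))) [0..<Suc j])" for i j
        using \<sigma>[of "prod_encode (i, j)"] K'_eq[of \<sigma> i j] by (simp del: upt_Suc)
      then show "x \<in> (\<Inter>i. suslin (K i))" by (auto simp: suslin_def)
    qed
    show "(\<Inter>i. suslin (K i)) \<subseteq> suslin K'"
    proof
      fix x assume "x \<in> (\<Inter>i. suslin (K i))"
      then have "\<forall>i. \<exists>\<tau>. \<forall>n. x \<in> K i (map \<tau> [0..<Suc n])" by (auto simp: suslin_def)
      then obtain \<tau> where \<tau>: "\<And>i n. x \<in> K i (map (\<tau> i) [0..<Suc n])" by metis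
      define \<sigma> where "\<sigma> m = (case prod_decode m of (i, j) \<Rightarrow> \<tau> i j)" for m
      have "x \<in> K' (map \<sigma> [0..<Suc n])" for n
      proof -
        obtain i j where "prod_decode n = (i, j)" by (cases "prod_decode n")
        then have n: "n = prod_encode (i, j)" by (metis prod_decode_inverse)
        have "map (\<lambda>k. \<sigma> (prod_encode (i, k))) [0..<Suc j] = map (\<tau> i) [0..<Suc j]"
          by (simp add: \<sigma>_def del: upt_Suc)
        then show ?thesis using \<tau>[of i j] K'_eq[of \<sigma> i j] n by (simp only:)
      qed
      then show "x \<in> suslin K'" by (auto simp: suslin_def)
    qed
  qed
  ultimately show ?thesis unfolding compact_suslin_def by blast
qed

lemma closed_imp_compact_suslin:
  fixes S :: "'a::{real_normed_vector, heine_borel} set"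
  assumes "closed S"
  shows "compact_suslin S"
proof -
  have "S = (\<Union>k::nat. S \<inter> cball 0 (real k))"
  proof (intro equalityI subsetI)
    fix x assume "x \<in> S"
    moreover obtain k :: nat where "norm x \<le> real k" using real_arch_simple by blast
    ultimately show "x \<in> (\<Union>k::nat. S \<inter> cball 0 (real k))" by auto
  qed auto
  moreover have "compact_suslin (S \<inter> cball 0 (real k))" for k
    by (intro compact_imp_compact_suslin closed_Int_compact assms compact_cball)
  ultimately show ?thesis using compact_suslin_UN by metis
qed

lemma open_imp_compact_suslin:
  fixes S :: "'a::euclidean_space set"
  assumes "open S"
  shows "compact_suslin S"
proof -
  obtain D where D: "countable D" "\<And>X. X \<in> D \<Longrightarrow> \<exists>a b. X = cbox a b" "\<Union>D = S"
    using open_countable_Union_open_cbox[OF assms] by metis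
  show ?thesis
  proof (cases "D = {}")
    case True
    then show ?thesis using D closed_imp_compact_suslin[of "{}"] by auto
  next
    case False
    have "S = (\<Union>i. from_nat_into D i)" using D(3) range_from_nat_into[OF False D(1)] by auto
    moreover have "compact_suslin (from_nat_into D i)" for i
      using D(2)[OF from_nat_into[OF False]] by (metis compact_cbox compact_imp_compact_suslin)
    ultimately show ?thesis using compact_suslin_UN by metis
  qed
qed

lemma borel_imp_compact_suslin:
  fixes A :: "'a::euclidean_space set"
  assumes "A \<in> sets borel"
  shows "compact_suslin A"
proof -
  have "A \<in> sigma_sets UNIV {S. open S}" using assms sets_borel by auto
  then have "compact_suslin A \<and> compact_suslin (- A)"
  proof induction
    case (Basic a)
    then show ?case by (auto intro: open_imp_compact_suslin closed_imp_compact_suslin)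
  next
    case Empty
    then show ?case by (auto intro: closed_imp_compact_suslin)
  next
    case (Compl a)
    then show ?case by (simp add: Compl_eq_Diff_UNIV[symmetric])
  next
    case (Union a)
    then show ?case by (auto intro: compact_suslin_UN compact_suslin_INT)
  qed
  then show ?thesis ..
qed

lemma fst_Inter_decseq_compact:
  fixes C :: "nat \<Rightarrow> ('a::t2_space \<times> 'b::t2_space) set"
  assumes compact: "\<And>n. compact (C n)" and dec: "\<And>n. C (Suc n) \<subseteq> C n"
    and x: "\<And>n. x \<in> fst ` C n"
  shows "x \<in> fst ` (\<Inter>n. C n)"
proof -
  define D where "D n = C n \<inter> ({x} \<times> UNIV)" for n
  have D_compact: "compact (D n)" for n
    unfolding D_def by (intro compact_Int_closed compact closed_Times) auto
  have D_dec: "D m \<subseteq> D n" if "n \<le> m" for n m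
    using lift_Suc_antimono_le[of D, OF _ that] dec by (auto simp: D_def)
  have D_nonempty: "D n \<noteq> {}" for n using x[of n] by (force simp: D_def)
  have "D 0 \<inter> \<Inter> (D ` UNIV) \<noteq> {}"
  proof (rule compact_imp_fip_image[OF D_compact])
    show "closed (D i)" for i using D_compact by (rule compact_imp_closed)
    fix I :: "nat set" assume "finite I"
    define m where "m = Max (insert 0 I)"
    have "D m \<subseteq> D i" if "i \<in> insert 0 I" for i
      using D_dec[of i m] Max_ge[of "insert 0 I" i] \<open>finite I\<close> that by (auto simp: m_def)
    then show "D 0 \<inter> \<Inter> (D ` I) \<noteq> {}" using D_nonempty[of m] by blast
  qed
  then obtain p where "\<And>n. p \<in> D n" by blast
  then have "p \<in> (\<Inter>n. C n)" "fst p = x" by (auto simp: D_def mem_Times_iff)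
  then show ?thesis by (metis image_eqI)
qed

lemma compact_suslin_fst:
  fixes E :: "('a::t2_space \<times> 'b::t2_space) set"
  assumes "compact_suslin E"
  shows "compact_suslin (fst ` E)"
proof -
  obtain K where K: "\<And>s. compact (K s)" and E: "E = suslin K"
    using assms unfolding compact_suslin_def by blast
  \<comment> \<open>Intersecting each node with its ancestors makes the sets decreasing along every branch,
    which lets projection commute with the intersection along a branch.\<close>
  define K' where "K' s = K s \<inter> (\<Inter>k\<in>{1..length s}. K (take k s))" for s
  have K'_compact: "compact (K' s)" for s
    unfolding K'_def by (intro compact_Int_closed K closed_INT ballI compact_imp_closed)
  have K'_branch: "K' (map \<sigma> [0..<Suc n]) = K (map \<sigma> [0..<Suc n]) \<inter> (\<Inter>k\<in>{1..Suc n}. K (map \<sigma> [0..<k]))"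
    for \<sigma> n
    unfolding K'_def
    by (intro arg_cong2[where f="(\<inter>)"] refl INF_cong) (auto simp del: upt_Suc simp: take_map take_upt)
  have same_branches: "(\<Inter>n. K' (map \<sigma> [0..<Suc n])) = (\<Inter>n. K (map \<sigma> [0..<Suc n]))" for \<sigma>
  proof
    show "(\<Inter>n. K' (map \<sigma> [0..<Suc n])) \<subseteq> (\<Inter>n. K (map \<sigma> [0..<Suc n]))"
      unfolding K'_branch by (auto simp del: upt_Suc)
    show "(\<Inter>n. K (map \<sigma> [0..<Suc n])) \<subseteq> (\<Inter>n. K' (map \<sigma> [0..<Suc n]))"
    proof
      fix x assume x: "x \<in> (\<Inter>n. K (map \<sigma> [0..<Suc n]))"
      have "x \<in> K (map \<sigma> [0..<k])" if "k \<in> {1..Suc n}" for k n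
        using x[THEN INT_D, of "k - 1"] that by (simp del: upt_Suc)
      then show "x \<in> (\<Inter>n. K' (map \<sigma> [0..<Suc n]))" unfolding K'_branch using x by (auto simp del: upt_Suc)
    qed
  qed
  have K'_dec: "K' (map \<sigma> [0..<Suc (Suc n)]) \<subseteq> K' (map \<sigma> [0..<Suc n])" for \<sigma> n
    unfolding K'_branch by (auto simp del: upt_Suc)
  have "fst ` E = suslin (\<lambda>s. fst ` K' s)"
  proof
    show "fst ` E \<subseteq> suslin (\<lambda>s. fst ` K' s)"
      unfolding E suslin_def same_branches[symmetric] by blast
    show "suslin (\<lambda>s. fst ` K' s) \<subseteq> fst ` E"
    proof
      fix x assume "x \<in> suslin (\<lambda>s. fst ` K' s)"
      then obtain \<sigma> where "\<And>n. x \<in> fst ` K' (map \<sigma> [0..<Suc n])" by (auto simp: suslin_def)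
      then have "x \<in> fst ` (\<Inter>n. K' (map \<sigma> [0..<Suc n]))"
        by (intro fst_Inter_decseq_compact K'_compact K'_dec)
      then show "x \<in> fst ` E" unfolding E suslin_def same_branches by blast
    qed
  qed
  moreover have "compact (fst ` K' s)" for s
    by (intro compact_continuous_image K'_compact continuous_intros)
  ultimately show ?thesis unfolding compact_suslin_def by (intro exI[of _ "\<lambda>s. fst ` K' s"]) simp
qed

lemma compact_suslin_imp_lebesgue:
  fixes A :: "'a::euclidean_space set"
  assumes "compact_suslin A"
  shows "A \<in> sets lebesgue"
proof -
  obtain K where K: "\<And>s. compact (K s)" and A: "A = suslin K"
    using assms unfolding compact_suslin_def by blast
  have "K s \<in> sets lebesgue" for s
    using borel_closed[OF compact_imp_closed[OF K]] by simp
  then show ?thesis unfolding A by (rule suslin_lebesgue)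
qed

section \<open>The sup-min convolution\<close>

lemma supmin_conv_commute: "supmin_conv f g = supmin_conv g f"
proof -
  have swap: "min (f (x - y)) (g y) \<le> (SUP z. min (g (x - z)) (f z))" for f g :: "'a \<Rightarrow> ennreal" and x y
    using SUP_upper[of "x - y" UNIV "\<lambda>z. min (g (x - z)) (f z)"] by (simp add: min.commute)
  show ?thesis
    unfolding supmin_conv_def by (intro ext antisym SUP_least swap)
qed

lemma supmin_conv_greater_eq_fst:
  "{x. y < supmin_conv f g x} = fst ` {p. y < f (snd p) \<and> y < g (fst p - snd p)}"
proof (intro set_eqI iffI)
  fix x assume "x \<in> {x. y < supmin_conv f g x}"
  then obtain z where "y < min (f (x - z)) (g z)" by (auto simp: supmin_conv_def less_SUP_iff)
  then show "x \<in> fst ` {p. y < f (snd p) \<and> y < g (fst p - snd p)}"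
    by (intro image_eqI[of _ _ "(x, x - z)"]) auto
next
  fix x assume "x \<in> fst ` {p. y < f (snd p) \<and> y < g (fst p - snd p)}"
  then obtain a where "y < min (f (x - (x - a))) (g (x - a))" by force
  also have "\<dots> \<le> supmin_conv f g x"
    unfolding supmin_conv_def by (rule SUP_upper) simp
  finally show "x \<in> {x. y < supmin_conv f g x}" by simp
qed

lemma supmin_conv_measurable:
  fixes f g :: "'a::euclidean_space \<Rightarrow> ennreal"
  assumes f: "f \<in> borel_measurable borel" and g: "g \<in> borel_measurable borel"
  shows "supmin_conv f g \<in> borel_measurable lebesgue"
proof (rule borel_measurableI_greater)
  fix y :: ennreal
  have f_snd: "(\<lambda>p::'a \<times> 'a. f (snd p)) \<in> borel_measurable borel"
    by (rule measurable_compose[OF borel_measurable_continuous_onI f]) (intro continuous_intros)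
  have g_diff: "(\<lambda>p::'a \<times> 'a. g (fst p - snd p)) \<in> borel_measurable borel"
    by (rule measurable_compose[OF borel_measurable_continuous_onI g]) (intro continuous_intros)
  have "{p. y < f (snd p) \<and> y < g (fst p - snd p)}
      = ((\<lambda>p. f (snd p)) -` {y<..} \<inter> space borel) \<inter> ((\<lambda>p. g (fst p - snd p)) -` {y<..} \<inter> space borel)"
    by auto
  also have "\<dots> \<in> sets borel"
    by (intro sets.Int measurable_sets[OF f_snd] measurable_sets[OF g_diff] borel_open open_greaterThan)
  finally have "fst ` {p. y < f (snd p) \<and> y < g (fst p - snd p)} \<in> sets lebesgue"
    by (intro compact_suslin_imp_lebesgue compact_suslin_fst borel_imp_compact_suslin)
  then show "{x \<in> space lebesgue. y < supmin_conv f g x} \<in> sets lebesgue"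
    by (simp add: supmin_conv_greater_eq_fst)
qed

section \<open>The Luxemburg norm inequality\<close>

lemma young_function_sup_continuous:
  assumes "young_function \<phi>"
  shows "sup_continuous \<phi>"
proof (rule continuous_at_left_imp_sup_continuous)
  show "mono \<phi>" using assms by (simp add: young_function_def)
  fix t :: ennreal
  show "continuous (at_left t) \<phi>"
  proof (cases "t = 0")
    case True
    then have "at_left t = bot"
      using trivial_limit_at_left_bot[where 'a=ennreal] by (simp add: bot_ennreal)
    then show ?thesis by (simp add: continuous_def)
  next
    case False
    then have "(\<phi> \<longlongrightarrow> \<phi> t) (at_left t)"
      using assms by (simp add: young_function_def zero_less_iff_neq_zero)
    then show ?thesis by (simp add: continuous_within)
  qed
qed

lemma mono_imp_borel_measurable:
  fixes \<phi> :: "'a::{complete_linorder, linorder_topology} \<Rightarrow> 'b::{linorder_topology, second_countable_topology}"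
  assumes "mono \<phi>"
  shows "\<phi> \<in> borel_measurable borel"
proof (rule borel_measurableI_greater)
  fix y
  define U where "U = {x. y < \<phi> x}"
  have up: "x' \<in> U" if "x \<in> U" "x \<le> x'" for x x'
    using that monoD[OF assms] by (auto simp: U_def intro: order.strict_trans2)
  have "U \<in> sets borel"
  proof (cases "Inf U \<in> U")
    case True
    then have "U = {Inf U..}" using up by (auto intro: Inf_lower)
    then show ?thesis by (metis borel_closed closed_atLeast)
  next
    case False
    have "U = {Inf U<..}"
    proof (intro set_eqI iffI)
      fix x assume "x \<in> U"
      then show "x \<in> {Inf U<..}" using False Inf_lower[of x U] by (auto simp: order.order_iff_strict)
    next
      fix x assume "x \<in> {Inf U<..}"
      then obtain u where "u \<in> U" "u < x" by (auto simp: Inf_less_iff)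
      then show "x \<in> U" using up by auto
    qed
    then show ?thesis by (metis borel_open open_greaterThan)
  qed
  then show "{x \<in> space borel. y < \<phi> x} \<in> sets borel" by (simp add: U_def)
qed

lemma SUP_min_eq_left:
  fixes a :: "'a::complete_linorder"
  assumes "a \<le> (SUP i\<in>I. c i)"
  shows "(SUP i\<in>I. min a (c i)) = a"
proof (rule antisym)
  show "(SUP i\<in>I. min a (c i)) \<le> a" by (rule SUP_least) simp
  show "a \<le> (SUP i\<in>I. min a (c i))"
  proof (rule ccontr)
    assume less: "\<not> a \<le> (SUP i\<in>I. min a (c i))"
    then have "c i \<le> (SUP i\<in>I. min a (c i))" if "i \<in> I" for i
      using SUP_upper[OF that, of "\<lambda>i. min a (c i)"] by (auto simp: min_def split: if_splits)
    then have "(SUP i\<in>I. c i) \<le> (SUP i\<in>I. min a (c i))" by (rule SUP_least)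
    with assms less show False by (blast intro: order.trans)
  qed
qed

lemma nn_integral_lebesgue_translate:
  fixes h :: "'a::euclidean_space \<Rightarrow> ennreal"
  assumes h: "h \<in> borel_measurable lebesgue"
  shows "(\<integral>\<^sup>+x. h (x + y) \<partial>lebesgue) = (\<integral>\<^sup>+x. h x \<partial>lebesgue)"
proof -
  have T: "(\<lambda>x. y + (\<Sum>j\<in>Basis. (1 * (x \<bullet> j)) *\<^sub>R j)) = (\<lambda>x::'a. y + x)"
    by (simp add: euclidean_representation)
  have eq: "lebesgue = density (distr lebesgue lebesgue (\<lambda>x::'a. y + x)) (\<lambda>_. 1)"
    using lebesgue_affine_euclidean[of "\<lambda>_. 1" y] unfolding T by simp
  have mT: "(\<lambda>x::'a. y + x) \<in> lebesgue \<rightarrow>\<^sub>M lebesgue"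
    using lebesgue_affine_measurable[of "\<lambda>_. 1" y] unfolding T by simp
  have "(\<integral>\<^sup>+x. h x \<partial>lebesgue) = (\<integral>\<^sup>+x. h x \<partial>density (distr lebesgue lebesgue (\<lambda>x::'a. y + x)) (\<lambda>_. 1))"
    by (subst eq) (rule refl)
  also have "\<dots> = (\<integral>\<^sup>+x. h x \<partial>distr lebesgue lebesgue (\<lambda>x::'a. y + x))"
    by (simp add: density_1)
  also have "\<dots> = (\<integral>\<^sup>+x. h (y + x) \<partial>lebesgue)"
    by (rule nn_integral_distr[OF mT]) (simp add: h)
  finally show ?thesis by (simp add: add.commute)
qed

lemma nn_integral_le_of_translates:
  fixes f F g :: "'a::euclidean_space \<Rightarrow> ennreal" and \<psi> :: "ennreal \<Rightarrow> ennreal"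
  assumes \<psi>: "sup_continuous \<psi>" "\<psi> \<in> borel_measurable borel"
    and f: "f \<in> borel_measurable lebesgue" and F: "F \<in> borel_measurable lebesgue"
    and f_le: "\<And>x. f x \<le> (SUP y. g y)"
    and translate: "\<And>x y. min (f x) (g y) \<le> F (x + y)"
  shows "(\<integral>\<^sup>+x. \<psi> (f x) \<partial>lebesgue) \<le> (\<integral>\<^sup>+x. \<psi> (F x) \<partial>lebesgue)"
proof -
  note [measurable] = \<psi>(2) f F
  obtain c where c: "incseq c" "range c \<subseteq> range g" "(SUP y. g y) = (SUP k. c k)"
    using ennreal_Sup_countable_SUP[of "range g"] by auto
  define u where "u k x = \<psi> (min (f x) (c k))" for k x
  have u_inc: "incseq u"
    using c(1) sup_continuous_mono[OF \<psi>(1)]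
    by (auto simp: incseq_def le_fun_def u_def intro!: monoD[of \<psi>] min.mono)
  have u_sup: "\<psi> (f x) = (SUP k. u k x)" for x
  proof -
    have "f x = (SUP k. min (f x) (c k))"
      using SUP_min_eq_left[of "f x" c UNIV] f_le c(3) by simp
    moreover have "mono (\<lambda>k. min (f x) (c k))"
      using c(1) by (intro monoI min.mono order.refl) (rule monoD)
    ultimately show ?thesis
      unfolding u_def by (metis sup_continuousD[OF \<psi>(1)])
  qed
  have "(\<integral>\<^sup>+x. \<psi> (f x) \<partial>lebesgue) = (SUP k. integral\<^sup>N lebesgue (u k))"
    unfolding u_sup by (rule nn_integral_monotone_convergence_SUP[OF u_inc]) (unfold u_def, measurable)
  also have "\<dots> \<le> (\<integral>\<^sup>+x. \<psi> (F x) \<partial>lebesgue)"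
  proof (rule SUP_least)
    fix k
    obtain y where y: "c k = g y" using c(2) by blast
    have "integral\<^sup>N lebesgue (u k) \<le> (\<integral>\<^sup>+x. \<psi> (F (x + y)) \<partial>lebesgue)"
      unfolding u_def y
      by (intro nn_integral_mono monoD[OF sup_continuous_mono[OF \<psi>(1)]] translate)
    also have "\<dots> = (\<integral>\<^sup>+x. \<psi> (F x) \<partial>lebesgue)"
      by (rule nn_integral_lebesgue_translate[where h="\<lambda>x. \<psi> (F x)"]) measurable
    finally show "integral\<^sup>N lebesgue (u k) \<le> (\<integral>\<^sup>+x. \<psi> (F x) \<partial>lebesgue)" .
  qed
  finally show ?thesis .
qed

lemma luxemburg_le_of_translates:
  fixes f F g :: "'a::euclidean_space \<Rightarrow> ennreal"
  assumes \<phi>: "young_function \<phi>"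
    and f: "f \<in> borel_measurable lebesgue" and F: "F \<in> borel_measurable lebesgue"
    and f_le: "\<And>x. f x \<le> (SUP y. g y)"
    and translate: "\<And>x y. min (f x) (g y) \<le> F (x + y)"
  shows "luxemburg \<phi> f \<le> luxemburg \<phi> F"
  unfolding luxemburg_def
proof (rule Inf_superset_mono, safe)
  fix r :: real
  assume "r > 0" and F_int: "(\<integral>\<^sup>+x. \<phi> (F x / ennreal r) \<partial>lebesgue) \<le> 1"
  have "sup_continuous (\<lambda>t. \<phi> (t / ennreal r))"
    by (intro sup_continuous_compose[OF young_function_sup_continuous[OF \<phi>]] order_continuous_intros)
  moreover have "(\<lambda>t. \<phi> (t / ennreal r)) \<in> borel_measurable borel"
    by (intro mono_imp_borel_measurable sup_continuous_mono) fact
  ultimately have "(\<integral>\<^sup>+x. \<phi> (f x / ennreal r) \<partial>lebesgue) \<le> (\<integral>\<^sup>+x. \<phi> (F x / ennreal r) \<partial>lebesgue)"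
    using nn_integral_le_of_translates[OF _ _ f F f_le translate] by blast
  with F_int \<open>r > 0\<close>
  show "\<exists>r'. ennreal r = ennreal r' \<and> 0 < r' \<and> (\<integral>\<^sup>+x. \<phi> (f x / ennreal r') \<partial>lebesgue) \<le> 1"
    by (blast intro: order.trans)
qed

lemma luxemburg_le_supmin_conv:
  fixes f g :: "'a::euclidean_space \<Rightarrow> ennreal"
  assumes "young_function \<phi>" and "f \<in> borel_measurable borel" and "g \<in> borel_measurable borel"
    and "\<And>x. f x \<le> (SUP y. g y)"
  shows "luxemburg \<phi> f \<le> luxemburg \<phi> (supmin_conv f g)"
proof (rule luxemburg_le_of_translates[OF assms(1) _ supmin_conv_measurable[OF assms(2,3)] assms(4)])
  show "f \<in> borel_measurable lebesgue" using assms(2) by (simp add: measurable_completion)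
  show "min (f x) (g y) \<le> supmin_conv f g (x + y)" for x y
  proof -
    have "min (f (x + y - y)) (g y) \<le> supmin_conv f g (x + y)"
      unfolding supmin_conv_def by (rule SUP_upper) simp
    then show ?thesis by simp
  qed
qed

theorem lemma6:
  fixes \<phi> :: "ennreal \<Rightarrow> ennreal" and f g :: "'a::euclidean_space \<Rightarrow> ennreal"
  assumes "young_function \<phi>"
    and "f \<in> borel_measurable borel" and "g \<in> borel_measurable borel"
    and "(SUP x. f x) = (SUP x. g x)"
  shows "supmin_conv f g \<in> borel_measurable lebesgue \<and>
         max (luxemburg \<phi> f) (luxemburg \<phi> g) \<le> luxemburg \<phi> (supmin_conv f g)"
proof -
  have "f x \<le> (SUP y. g y)" "g x \<le> (SUP y. f y)" for x
    using assms(4) by (metis SUP_upper UNIV_I)+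
  then have "luxemburg \<phi> f \<le> luxemburg \<phi> (supmin_conv f g)"
    and "luxemburg \<phi> g \<le> luxemburg \<phi> (supmin_conv g f)"
    using luxemburg_le_supmin_conv[OF assms(1)] assms(2,3) by blast+
  with supmin_conv_measurable[OF assms(2,3)] show ?thesis
    by (simp add: supmin_conv_commute[of g f])
qed

end
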